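(* Let $x(t)=(x_1(t),x_2(t))$ solve $\dot x=f(x)$ and $x^u(t)$ solve $\dot x^u=h(x^u)$ on $t\ge0$, where $$f(x_1,x_2)=\begin{bmatrix}-Dx_1+\gamma DP\big(M(x_2+Q^* )-M(Q^* )\big)\\ \beta Dx_1-\beta Dx_2\end{bmatrix},\qquad h(x_1,x_2)=\begin{bmatrix}-Dx_1+\gamma DPM(x_2)\\ \beta Dx_1-\beta Dx_2\end{bmatrix}.$$ If $x^u(0)>x(0)$ elementwise, then $x^u(t)\ge x(t)$ elementwise for all $t\ge0$.
   Context: Finite MDP with states $\mathcal S$, actions $\mathcal A$, kernel $P$, expected reward $R$, discount $\gamma\in[0,1)$; $\beta>0$; $n=|\mathcal S||\mathcal A|$. $D$ is the diagonal matrix of a probability distribution $d>0$ on $\mathcal S\times\mathcal A$; $P$ is the $n\times|\mathcal S|$ matrix with row $(s,a)$ equal to $P(\cdot\mid s,a)$; $M(Q)(s)=\max_aQ(s,a)$; $Q^*=R+\gamma PM(Q^* )$. (Both vector fields are globally Lipschitz, so solutions exist and are unique.) *)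

theory Defs
  imports "HOL-Analysis.Analysis"
begin

text \<open>Q-functions are vectors indexed by state-action pairs; value functions by states.
  The transition kernel is given as Pk s a s' = P(s' | s, a).\<close>

definition maxQ :: "real ^ ('s::finite \<times> 'a::finite) \<Rightarrow> real ^ 's" where
  "maxQ Q = (\<chi> s. Max (range (\<lambda>a. Q $ (s, a))))"

definition Pmat :: "('s::finite \<Rightarrow> 'a::finite \<Rightarrow> 's \<Rightarrow> real) \<Rightarrow> real ^ 's \<Rightarrow> real ^ ('s \<times> 'a)" where
  "Pmat Pk v = (\<chi> sa. \<Sum>s'\<in>UNIV. Pk (fst sa) (snd sa) s' * v $ s')"

definition Dmat :: "real ^ 'n::finite \<Rightarrow> real ^ 'n \<Rightarrow> real ^ 'n" where
  "Dmat d x = (\<chi> i. d $ i * x $ i)"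

end

theory Submission
  imports Defs
begin

text \<open>The gap \<open>\<delta> = x\<^sup>u - x\<close> obeys a cooperative differential inequality: whenever all its
  components are \<open>\<ge> -c\<close> and one of them equals \<open>-c\<close>, the velocity of that component is
  \<open>\<ge> 0\<close>. For the first block this is because \<open>M(x\<^sub>2 + Q\<^sup>*) - M(Q\<^sup>*) \<le> M(x\<^sub>2)\<close>, \<open>M\<close> is
  monotone and 1-Lipschitz in the sup norm and \<open>P\<close> is stochastic, so the discounted term
  loses at most \<open>\<gamma> c \<le> c\<close>; the second block is a plain averaging. Perturbing the gap by
  \<open>\<epsilon> e\<^sup>t\<close> makes the inequality strict, so it can never reach zero first, and
  \<open>\<epsilon> \<rightarrow> 0\<close> gives the claim.\<close>

lemma has_vector_derivative_vec_nth:
  "(f has_vector_derivative f') F \<Longrightarrow> ((\<lambda>t. f t $ i) has_real_derivative f' $ i) F"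
  using bounded_linear.has_vector_derivative[OF bounded_linear_vec_nth, of f f' F i]
  by (simp add: has_real_derivative_iff_has_vector_derivative)

lemma positivity_preserved:
  fixes z z' :: "'i::finite \<Rightarrow> real \<Rightarrow> real"
  assumes deriv: "\<And>j t. t \<ge> 0 \<Longrightarrow> (z j has_real_derivative z' j t) (at t within {0..})"
    and init: "\<And>j. z j 0 > 0"
    and boundary: "\<And>j t. t > 0 \<Longrightarrow> (\<And>k. z k t \<ge> 0) \<Longrightarrow> z j t = 0 \<Longrightarrow> z' j t > 0"
    and "t \<ge> 0"
  shows "z j t > 0"
proof (rule ccontr)
  assume "\<not> z j t > 0"
  have cont: "continuous_on {0..} (z k)" for k
    using deriv by (metis atLeast_iff continuous_on_eq_continuous_within DERIV_continuous)
  define S where "S = (\<Union>k. {0..} \<inter> z k -` {..0})"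
  have S_iff: "s \<in> S \<longleftrightarrow> s \<ge> 0 \<and> (\<exists>k. z k s \<le> 0)" for s
    unfolding S_def by auto
  have "closed S"
    unfolding S_def
    by (intro closed_Union finite_imageI finite_UNIV ballI) (auto intro!: continuous_closed_preimage cont)
  moreover have "t \<in> S"
    using \<open>\<not> z j t > 0\<close> \<open>t \<ge> 0\<close> by (auto simp: S_iff not_less)
  moreover have "bdd_below S"
    by (auto simp: S_iff intro!: bdd_belowI[of _ 0])
  ultimately have "Inf S \<in> S"
    by (intro closed_contains_Inf) auto
  define T where "T = Inf S"
  have before: "z k s > 0" if "0 \<le> s" "s < T" for k s
  proof -
    have "s \<notin> S"
      using that cInf_lower[OF _ \<open>bdd_below S\<close>, of s] by (auto simp: T_def)
    then show ?thesis
      using that by (auto simp: S_iff not_le)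
  qed
  obtain i where "T \<ge> 0" "z i T \<le> 0"
    using \<open>Inf S \<in> S\<close> by (auto simp: T_def S_iff)
  then have "T > 0"
    using init[of i] by (cases "T = 0") auto
  have at_T: "z k T \<ge> 0" for k
  proof -
    have "{0..<T} \<subseteq> {0..} \<inter> z k -` {0..}"
      using before by (force intro: less_imp_le)
    moreover have "closed ({0..} \<inter> z k -` {0..})"
      by (intro continuous_closed_preimage cont) auto
    ultimately have "closure {0..<T} \<subseteq> {0..} \<inter> z k -` {0..}"
      by (rule closure_minimal)
    then show ?thesis
      using closure_atLeastLessThan[OF \<open>T > 0\<close>] \<open>T > 0\<close> by (auto simp: subset_iff)
  qed
  have "z' i T > 0"
    using boundary[OF \<open>T > 0\<close> at_T] at_T[of i] \<open>z i T \<le> 0\<close> by simp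
  then obtain e where e: "e > 0" "\<And>h. h > 0 \<Longrightarrow> T - h \<in> {0..} \<Longrightarrow> h < e \<Longrightarrow> z i (T - h) < z i T"
    using has_real_derivative_pos_inc_left[OF deriv[OF \<open>T \<ge> 0\<close>]] by blast
  define h where "h = min (e/2) T"
  have "0 < h" "h < e" "h \<le> T"
    using e \<open>T > 0\<close> by (auto simp: h_def)
  then have "z i (T - h) < z i T" "z i (T - h) > 0"
    using e before by auto
  then show False
    using \<open>z i T \<le> 0\<close> by simp
qed

lemma nonneg_preserved:
  fixes e e' :: "'i::finite \<Rightarrow> real \<Rightarrow> real"
  assumes deriv: "\<And>j t. t \<ge> 0 \<Longrightarrow> (e j has_real_derivative e' j t) (at t within {0..})"
    and init: "\<And>j. e j 0 \<ge> 0"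
    and boundary: "\<And>j t c. t > 0 \<Longrightarrow> c > 0 \<Longrightarrow> (\<And>k. e k t \<ge> -c) \<Longrightarrow> e j t = -c \<Longrightarrow> e' j t \<ge> 0"
    and "t \<ge> 0"
  shows "e j t \<ge> 0"
proof (rule ccontr)
  assume "\<not> e j t \<ge> 0"
  define \<epsilon> where "\<epsilon> = - e j t / (2 * exp t)"
  have "\<epsilon> > 0"
    using \<open>\<not> e j t \<ge> 0\<close> by (simp add: \<epsilon>_def divide_neg_pos)
  have "e j t + \<epsilon> * exp t > 0"
  proof (rule positivity_preserved[where z = "\<lambda>k s. e k s + \<epsilon> * exp s"])
    show "((\<lambda>s. e k s + \<epsilon> * exp s) has_real_derivative e' k s + \<epsilon> * exp s) (at s within {0..})"
      if "s \<ge> 0" for k s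
      using deriv[OF that] by (auto intro!: derivative_eq_intros)
    show "e k 0 + \<epsilon> * exp 0 > 0" for k
      using init[of k] \<open>\<epsilon> > 0\<close> by simp
    show "e' k s + \<epsilon> * exp s > 0"
      if "s > 0" "\<And>l. e l s + \<epsilon> * exp s \<ge> 0" "e k s + \<epsilon> * exp s = 0" for k s
      using boundary[of s "\<epsilon> * exp s" k] that mult_pos_pos[OF \<open>\<epsilon> > 0\<close> exp_gt_zero[of s]]
      by (auto simp: add_eq_0_iff)
  qed fact
  then show False
    using \<open>\<not> e j t \<ge> 0\<close> by (simp add: \<epsilon>_def)
qed

lemma two_block_nonneg_preserved:
  fixes g h g' h' :: "real \<Rightarrow> real ^ 'n::finite"
  assumes g_deriv: "\<And>t. t \<ge> 0 \<Longrightarrow> (g has_vector_derivative g' t) (at t within {0..})"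
    and h_deriv: "\<And>t. t \<ge> 0 \<Longrightarrow> (h has_vector_derivative h' t) (at t within {0..})"
    and init: "\<And>k. g 0 $ k \<ge> 0" "\<And>k. h 0 $ k \<ge> 0"
    and g_boundary: "\<And>t c k. t > 0 \<Longrightarrow> c > 0 \<Longrightarrow> (\<And>l. g t $ l \<ge> -c) \<Longrightarrow> (\<And>l. h t $ l \<ge> -c)
        \<Longrightarrow> g t $ k = -c \<Longrightarrow> g' t $ k \<ge> 0"
    and h_boundary: "\<And>t c k. t > 0 \<Longrightarrow> c > 0 \<Longrightarrow> (\<And>l. g t $ l \<ge> -c) \<Longrightarrow> (\<And>l. h t $ l \<ge> -c)
        \<Longrightarrow> h t $ k = -c \<Longrightarrow> h' t $ k \<ge> 0"
    and "t \<ge> 0"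
  shows "g t $ k \<ge> 0 \<and> h t $ k \<ge> 0"
proof -
  define e where "e j s = (case j of Inl k \<Rightarrow> g s $ k | Inr k \<Rightarrow> h s $ k)" for j :: "'n + 'n" and s
  define e' where "e' j s = (case j of Inl k \<Rightarrow> g' s $ k | Inr k \<Rightarrow> h' s $ k)" for j :: "'n + 'n" and s
  have "e j t \<ge> 0" for j
  proof (rule nonneg_preserved[OF _ _ _ \<open>t \<ge> 0\<close>])
    show "((\<lambda>s. e j s) has_real_derivative e' j s) (at s within {0..})" if "s \<ge> 0" for j s
      using g_deriv[OF that] h_deriv[OF that]
      by (cases j) (auto simp: e_def e'_def intro!: has_vector_derivative_vec_nth)
    show "e j 0 \<ge> 0" for j
      using init by (cases j) (simp_all add: e_def)
    show "e' j s \<ge> 0" if "s > 0" "c > 0" "\<And>k. e k s \<ge> -c" "e j s = -c" for j s c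
      using that g_boundary[OF that(1,2)] h_boundary[OF that(1,2)]
        that(3)[of "Inl _"] that(3)[of "Inr _"]
      by (cases j) (simp_all add: e_def e'_def)
  qed
  from this[of "Inl k"] this[of "Inr k"] show ?thesis
    by (simp add: e_def)
qed

lemma maxQ_ge: "Q $ (s, a) \<le> maxQ Q $ s"
  unfolding maxQ_def by (auto intro: Max_ge)

lemma maxQ_attained: "\<exists>a. maxQ Q $ s = Q $ (s, a)"
proof -
  have "Max (range (\<lambda>a. Q $ (s, a))) \<in> range (\<lambda>a. Q $ (s, a))"
    by (rule Max_in) auto
  then obtain a where "Max (range (\<lambda>a. Q $ (s, a))) = Q $ (s, a)"
    by blast
  then show ?thesis
    unfolding maxQ_def by auto
qed

lemma maxQ_add_le: "maxQ (x + y) $ s \<le> maxQ x $ s + maxQ y $ s"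
proof -
  obtain a where "maxQ (x + y) $ s = (x + y) $ (s, a)"
    using maxQ_attained by blast
  then show ?thesis
    using maxQ_ge[of x s a] maxQ_ge[of y s a] by simp
qed

lemma maxQ_le_add_const:
  assumes "\<And>i. x $ i \<le> y $ i + c"
  shows "maxQ x $ s \<le> maxQ y $ s + c"
proof -
  obtain a where "maxQ x $ s = x $ (s, a)"
    using maxQ_attained by blast
  then show ?thesis
    using assms[of "(s, a)"] maxQ_ge[of y s a] by simp
qed

lemma Pmat_diff: "Pmat Pk v $ i - Pmat Pk w $ i = Pmat Pk (v - w) $ i"
  unfolding Pmat_def by (simp add: sum_subtractf[symmetric] algebra_simps)

lemma Pmat_ge_const:
  assumes "\<And>s a s'. Pk s a s' \<ge> 0" "\<And>s a. (\<Sum>s'\<in>UNIV. Pk s a s') = 1"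
    and "\<And>s. c \<le> v $ s"
  shows "c \<le> Pmat Pk v $ i"
proof -
  have "c = (\<Sum>s'\<in>UNIV. Pk (fst i) (snd i) s' * c)"
    using assms(2) by (simp add: sum_distrib_right[symmetric])
  also have "\<dots> \<le> (\<Sum>s'\<in>UNIV. Pk (fst i) (snd i) s' * v $ s')"
    using assms(1,3) by (intro sum_mono mult_left_mono) auto
  finally show ?thesis
    unfolding Pmat_def by simp
qed

lemma Q_gap_drift_nonneg:
  assumes "\<And>s a s'. Pk s a s' \<ge> 0" "\<And>s a. (\<Sum>s'\<in>UNIV. Pk s a s') = 1"
    and "0 \<le> \<gamma>" "\<gamma> \<le> 1" "d $ i \<ge> 0" "c \<ge> 0"
    and lower: "\<And>k. v2 $ k - c \<le> u2 $ k"
    and touch: "u1 $ i - v1 $ i = -c"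
  shows "0 \<le> ((- Dmat d u1 + \<gamma> *\<^sub>R Dmat d (Pmat Pk (maxQ u2)))
      - (- Dmat d v1 + \<gamma> *\<^sub>R Dmat d (Pmat Pk (maxQ (v2 + Qs) - maxQ Qs)))) $ i"
proof -
  have "- c \<le> (maxQ u2 - (maxQ (v2 + Qs) - maxQ Qs)) $ s" for s
  proof -
    have "maxQ v2 $ s \<le> maxQ u2 $ s + c"
      by (rule maxQ_le_add_const, rule lower[unfolded diff_le_eq])
    then show ?thesis
      using maxQ_add_le[of v2 Qs s] by simp
  qed
  then have "- c \<le> Pmat Pk (maxQ u2) $ i - Pmat Pk (maxQ (v2 + Qs) - maxQ Qs) $ i"
    unfolding Pmat_diff by (rule Pmat_ge_const[OF assms(1,2)])
  then have "\<gamma> * (d $ i * Pmat Pk (maxQ (v2 + Qs) - maxQ Qs) $ i) - \<gamma> * (d $ i * Pmat Pk (maxQ u2) $ i)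
      \<le> \<gamma> * (d $ i * c)"
    using assms(3,5) by (simp add: right_diff_distrib[symmetric] mult_left_mono)
  also have "\<dots> \<le> d $ i * c"
    using assms(3-6) by (simp add: mult_left_le_one_le)
  moreover have "d $ i * v1 $ i = d $ i * u1 $ i + d $ i * c"
    using touch by (simp add: right_diff_distrib[symmetric] distrib_left[symmetric])
  ultimately show ?thesis
    by (simp add: Dmat_def)
qed

lemma averaging_gap_drift_nonneg:
  assumes "\<beta> \<ge> 0" "d $ i \<ge> 0" "u2 $ i - v2 $ i \<le> u1 $ i - v1 $ i"
  shows "0 \<le> ((\<beta> *\<^sub>R Dmat d u1 - \<beta> *\<^sub>R Dmat d u2) - (\<beta> *\<^sub>R Dmat d v1 - \<beta> *\<^sub>R Dmat d v2)) $ i"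
proof -
  have "0 \<le> \<beta> * d $ i * ((u1 $ i - v1 $ i) - (u2 $ i - v2 $ i))"
    using assms by simp
  then show ?thesis
    by (simp add: Dmat_def algebra_simps)
qed

theorem mainTheorem9:
  fixes Pk :: "'s::finite \<Rightarrow> 'a::finite \<Rightarrow> 's \<Rightarrow> real"
    and R d Qs :: "real ^ ('s \<times> 'a)"
    and \<gamma> \<beta> :: real
    and x1 x2 xu1 xu2 :: "real \<Rightarrow> real ^ ('s \<times> 'a)"
  assumes P_nonneg: "\<And>s a s'. Pk s a s' \<ge> 0"
    and P_sum: "\<And>s a. (\<Sum>s'\<in>UNIV. Pk s a s') = 1"
    and gamma: "0 \<le> \<gamma>" "\<gamma> < 1"
    and beta: "\<beta> > 0"
    and d_pos: "\<And>i. d $ i > 0"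
    and d_sum: "(\<Sum>i\<in>UNIV. d $ i) = 1"
    and Qs_fix: "Qs = R + \<gamma> *\<^sub>R Pmat Pk (maxQ Qs)"
    and x1_ode: "\<And>t. t \<ge> 0 \<Longrightarrow> (x1 has_vector_derivative
        (- Dmat d (x1 t) + \<gamma> *\<^sub>R Dmat d (Pmat Pk (maxQ (x2 t + Qs) - maxQ Qs)))) (at t within {0..})"
    and x2_ode: "\<And>t. t \<ge> 0 \<Longrightarrow> (x2 has_vector_derivative
        (\<beta> *\<^sub>R Dmat d (x1 t) - \<beta> *\<^sub>R Dmat d (x2 t))) (at t within {0..})"
    and xu1_ode: "\<And>t. t \<ge> 0 \<Longrightarrow> (xu1 has_vector_derivative
        (- Dmat d (xu1 t) + \<gamma> *\<^sub>R Dmat d (Pmat Pk (maxQ (xu2 t))))) (at t within {0..})"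
    and xu2_ode: "\<And>t. t \<ge> 0 \<Longrightarrow> (xu2 has_vector_derivative
        (\<beta> *\<^sub>R Dmat d (xu1 t) - \<beta> *\<^sub>R Dmat d (xu2 t))) (at t within {0..})"
    and init: "\<And>i. xu1 0 $ i > x1 0 $ i" "\<And>i. xu2 0 $ i > x2 0 $ i"
  shows "\<forall>t\<ge>0. \<forall>i. xu1 t $ i \<ge> x1 t $ i \<and> xu2 t $ i \<ge> x2 t $ i"
proof (intro allI impI)
  fix t :: real and i :: "'s \<times> 'a"
  assume "t \<ge> 0"
  have "(xu1 t - x1 t) $ i \<ge> 0 \<and> (xu2 t - x2 t) $ i \<ge> 0"
  proof (rule two_block_nonneg_preserved[OF _ _ _ _ _ _ \<open>t \<ge> 0\<close>])
    show "((\<lambda>t. xu1 t - x1 t) has_vector_derivative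
        (- Dmat d (xu1 s) + \<gamma> *\<^sub>R Dmat d (Pmat Pk (maxQ (xu2 s))))
        - (- Dmat d (x1 s) + \<gamma> *\<^sub>R Dmat d (Pmat Pk (maxQ (x2 s + Qs) - maxQ Qs)))) (at s within {0..})"
      "((\<lambda>t. xu2 t - x2 t) has_vector_derivative
        (\<beta> *\<^sub>R Dmat d (xu1 s) - \<beta> *\<^sub>R Dmat d (xu2 s))
        - (\<beta> *\<^sub>R Dmat d (x1 s) - \<beta> *\<^sub>R Dmat d (x2 s))) (at s within {0..})" if "s \<ge> 0" for s
      using has_vector_derivative_diff[OF xu1_ode[OF that] x1_ode[OF that]]
        has_vector_derivative_diff[OF xu2_ode[OF that] x2_ode[OF that]] by simp_all
    show "(xu1 0 - x1 0) $ k \<ge> 0" "(xu2 0 - x2 0) $ k \<ge> 0" for k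
      using init[of k] by simp_all
  next
    fix s c k
    assume "c > 0" and gap1: "\<And>l. (xu1 s - x1 s) $ l \<ge> -c" and gap2: "\<And>l. (xu2 s - x2 s) $ l \<ge> -c"
    show "(xu1 s - x1 s) $ k = -c \<Longrightarrow> 0 \<le> ((- Dmat d (xu1 s) + \<gamma> *\<^sub>R Dmat d (Pmat Pk (maxQ (xu2 s))))
        - (- Dmat d (x1 s) + \<gamma> *\<^sub>R Dmat d (Pmat Pk (maxQ (x2 s + Qs) - maxQ Qs)))) $ k"
      by (rule Q_gap_drift_nonneg[OF P_nonneg P_sum gamma(1) less_imp_le[OF gamma(2)]
          less_imp_le[OF d_pos[of k]] less_imp_le[OF \<open>c > 0\<close>]]) (use gap2 in \<open>simp_all add: algebra_simps\<close>)
    show "(xu2 s - x2 s) $ k = -c \<Longrightarrow> 0 \<le> ((\<beta> *\<^sub>R Dmat d (xu1 s) - \<beta> *\<^sub>R Dmat d (xu2 s))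
        - (\<beta> *\<^sub>R Dmat d (x1 s) - \<beta> *\<^sub>R Dmat d (x2 s))) $ k"
      by (rule averaging_gap_drift_nonneg[OF less_imp_le[OF beta] less_imp_le[OF d_pos[of k]]])
        (use gap1[of k] in simp)
  qed
  then show "xu1 t $ i \<ge> x1 t $ i \<and> xu2 t $ i \<ge> x2 t $ i"
    by simp
qed

end
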